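(* For every $n\geq 0$, the partially ordered set $\mathcal{L}_n^*$ is a distributive lattice.
   Context: Games are finite partizan games; $o(G)$ is the misère outcome class (ordered $\mathscr{L}>\mathscr{N}>\mathscr{R}$, $\mathscr{L}>\mathscr{P}>\mathscr{R}$). A universe is a set of games closed under options, disjunctive sums, conjugates, and forming $\{\mathscr{G}^L\mid\mathscr{G}^R\}$ from nonempty finite subsets of it; $G\geq_\mathcal{U}H$ means $o(G+X)\geq o(H+X)$ for all $X\in\mathcal{U}$. A Left dead-end is a game all of whose subpositions have no Left option. For Left dead-ends, $G\geq H$ means $G\geq_\mathcal{U}H$ for every universe $\mathcal{U}$, and $G=H$ means $G\geq H$ and $H\geq G$. The birthday of a Left dead-end $G$ is the minimum height of the game tree of a Left dead-end $H$ with $H=G$. $\mathcal{L}_n$ is the set of $=$-equivalence classes of Left dead-ends of birthday $\leq n$, partially ordered by $\geq$; $\mathcal{L}_n^\times=\mathcal{L}_n\setminus\{0\}$; $\mathcal{L}_n^*=\mathcal{L}_n^\times\cup\{\triangledown\}$ where $\triangledown$ is a new element with $\triangledown\geq G$ for all $G\in\mathcal{L}_n^\times$. *)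

theory Defs
  imports Main "HOL-Library.FSet"
begin

datatype game = Game (lopts: "game fset") (ropts: "game fset")

definition zero_game :: game where
  "zero_game = Game {||} {||}"

primrec height :: "game \<Rightarrow> nat" where
  "height (Game L R) =
     (if L = {||} \<and> R = {||} then 0
      else Suc (Max (fset (fimage height L |\<union>| fimage height R))))"

lemma size_lopt: "x |\<in>| L \<Longrightarrow> size x < size (Game L R)"
  by (induct L) (auto simp: sum.insert_if)

lemma size_ropt: "x |\<in>| R \<Longrightarrow> size x < size (Game L R)"
  by (induct R) (auto simp: sum.insert_if)

function gsum :: "game \<Rightarrow> game \<Rightarrow> game" where
  "gsum (Game L1 R1) (Game L2 R2) =
     Game ((\<lambda>x. gsum x (Game L2 R2)) |`| L1 |\<union>| (\<lambda>y. gsum (Game L1 R1) y) |`| L2)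
          ((\<lambda>x. gsum x (Game L2 R2)) |`| R1 |\<union>| (\<lambda>y. gsum (Game L1 R1) y) |`| R2)"
  by pat_completeness auto
termination
  by (relation "measure (\<lambda>(g, h). size g + size h)")
     (auto dest: size_lopt size_ropt)

primrec conj :: "game \<Rightarrow> game" where
  "conj (Game L R) = Game (fimage conj R) (fimage conj L)"

text \<open>\<open>wins G p\<close>: the player \<open>p\<close> (\<open>True\<close> = Left, \<open>False\<close> = Right), moving first in \<open>G\<close>,
  wins under the misere convention (a player with no move available wins).\<close>
primrec wins :: "game \<Rightarrow> bool \<Rightarrow> bool" where
  "wins (Game L R) =
     (\<lambda>p. if p then L = {||} \<or> (\<exists>f\<in>fset (fimage wins L). \<not> f False)
          else R = {||} \<or> (\<exists>f\<in>fset (fimage wins R). \<not> f True))"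

datatype outcome = OutL | OutN | OutP | OutR

definition outcome :: "game \<Rightarrow> outcome" where
  "outcome G =
     (if wins G True then (if wins G False then OutN else OutL)
      else (if wins G False then OutR else OutP))"

definition outcome_ge :: "outcome \<Rightarrow> outcome \<Rightarrow> bool" where
  "outcome_ge a b \<longleftrightarrow> a = b \<or> a = OutL \<or> b = OutR"

inductive_set subpositions :: "game \<Rightarrow> game set" for G :: game where
  self: "G \<in> subpositions G"
| lopt: "H \<in> subpositions G \<Longrightarrow> x |\<in>| lopts H \<Longrightarrow> x \<in> subpositions G"
| ropt: "H \<in> subpositions G \<Longrightarrow> x |\<in>| ropts H \<Longrightarrow> x \<in> subpositions G"

definition universe :: "game set \<Rightarrow> bool" where
  "universe U \<longleftrightarrow>
     (\<forall>G\<in>U. \<forall>x. (x |\<in>| lopts G \<or> x |\<in>| ropts G) \<longrightarrow> x \<in> U) \<and>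
     (\<forall>G\<in>U. \<forall>H\<in>U. gsum G H \<in> U) \<and>
     (\<forall>G\<in>U. conj G \<in> U) \<and>
     (\<forall>A B. A \<noteq> {||} \<longrightarrow> B \<noteq> {||} \<longrightarrow> fset A \<subseteq> U \<longrightarrow> fset B \<subseteq> U \<longrightarrow> Game A B \<in> U)"

definition ge_in :: "game set \<Rightarrow> game \<Rightarrow> game \<Rightarrow> bool" where
  "ge_in U G H \<longleftrightarrow> (\<forall>X\<in>U. outcome_ge (outcome (gsum G X)) (outcome (gsum H X)))"

definition left_dead_end :: "game \<Rightarrow> bool" where
  "left_dead_end G \<longleftrightarrow> (\<forall>H\<in>subpositions G. lopts H = {||})"

definition dge :: "game \<Rightarrow> game \<Rightarrow> bool" where
  "dge G H \<longleftrightarrow> (\<forall>U. universe U \<longrightarrow> ge_in U G H)"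

definition deq :: "game \<Rightarrow> game \<Rightarrow> bool" where
  "deq G H \<longleftrightarrow> dge G H \<and> dge H G"

definition birthday :: "game \<Rightarrow> nat" where
  "birthday G = (LEAST h. \<exists>H. left_dead_end H \<and> deq H G \<and> height H = h)"

definition dclass :: "game \<Rightarrow> game set" where
  "dclass G = {H. left_dead_end H \<and> deq H G}"

definition Ln :: "nat \<Rightarrow> game set set" where
  "Ln n = {dclass G | G. left_dead_end G \<and> birthday G \<le> n}"

definition class_le :: "game set \<Rightarrow> game set \<Rightarrow> bool" where
  "class_le A B \<longleftrightarrow> (\<exists>G\<in>A. \<exists>H\<in>B. dge H G)"

definition Ln_times :: "nat \<Rightarrow> game set set" where
  "Ln_times n = Ln n - {dclass zero_game}"

text \<open>\<open>L_n^*\<close>: \<open>None\<close> is the new top element \<open>\<triangledown>\<close>, \<open>Some A\<close> the class \<open>A \<in> L_n^\<times>\<close>.\<close>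
definition Ln_star :: "nat \<Rightarrow> game set option set" where
  "Ln_star n = insert None (Some ` Ln_times n)"

fun star_le :: "game set option \<Rightarrow> game set option \<Rightarrow> bool" where
  "star_le _ None = True"
| "star_le None (Some _) = False"
| "star_le (Some A) (Some B) = class_le A B"

definition poset_on :: "'a set \<Rightarrow> ('a \<Rightarrow> 'a \<Rightarrow> bool) \<Rightarrow> bool" where
  "poset_on S le \<longleftrightarrow>
     (\<forall>x\<in>S. le x x) \<and>
     (\<forall>x\<in>S. \<forall>y\<in>S. le x y \<and> le y x \<longrightarrow> x = y) \<and>
     (\<forall>x\<in>S. \<forall>y\<in>S. \<forall>z\<in>S. le x y \<and> le y z \<longrightarrow> le x z)"

definition is_join :: "'a set \<Rightarrow> ('a \<Rightarrow> 'a \<Rightarrow> bool) \<Rightarrow> 'a \<Rightarrow> 'a \<Rightarrow> 'a \<Rightarrow> bool" where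
  "is_join S le x y z \<longleftrightarrow> z \<in> S \<and> le x z \<and> le y z \<and> (\<forall>w\<in>S. le x w \<and> le y w \<longrightarrow> le z w)"

definition is_meet :: "'a set \<Rightarrow> ('a \<Rightarrow> 'a \<Rightarrow> bool) \<Rightarrow> 'a \<Rightarrow> 'a \<Rightarrow> 'a \<Rightarrow> bool" where
  "is_meet S le x y z \<longleftrightarrow> z \<in> S \<and> le z x \<and> le z y \<and> (\<forall>w\<in>S. le w x \<and> le w y \<longrightarrow> le w z)"

definition join_on :: "'a set \<Rightarrow> ('a \<Rightarrow> 'a \<Rightarrow> bool) \<Rightarrow> 'a \<Rightarrow> 'a \<Rightarrow> 'a" where
  "join_on S le x y = (THE z. is_join S le x y z)"

definition meet_on :: "'a set \<Rightarrow> ('a \<Rightarrow> 'a \<Rightarrow> bool) \<Rightarrow> 'a \<Rightarrow> 'a \<Rightarrow> 'a" where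
  "meet_on S le x y = (THE z. is_meet S le x y z)"

definition distributive_lattice_on :: "'a set \<Rightarrow> ('a \<Rightarrow> 'a \<Rightarrow> bool) \<Rightarrow> bool" where
  "distributive_lattice_on S le \<longleftrightarrow>
     poset_on S le \<and>
     (\<forall>x\<in>S. \<forall>y\<in>S. \<exists>z. is_join S le x y z) \<and>
     (\<forall>x\<in>S. \<forall>y\<in>S. \<exists>z. is_meet S le x y z) \<and>
     (\<forall>x\<in>S. \<forall>y\<in>S. \<forall>z\<in>S.
        meet_on S le x (join_on S le y z) = join_on S le (meet_on S le x y) (meet_on S le x z))"

end

theory Submission
  imports Defs
begin

text \<open>For Left dead-ends the misere order has a recursive description: \<open>G \<ge> H\<close> iff every Right
  option of \<open>G\<close> is \<open>\<ge>\<close> some Right option of \<open>H\<close>, and \<open>H = 0\<close> whenever \<open>G = 0\<close>.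
  Sufficiency follows by induction on the other summand; for necessity one builds, by recursion
  on \<open>G\<close>, a game \<open>X\<close> such that Right wins \<open>G + X\<close> moving first but loses \<open>H + X\<close>.
  Consequently a nonzero Left dead-end of height at most \<open>n\<close> is determined up to \<open>=\<close> by the
  up-set that its Right options generate in the preorder of Left dead-ends of height below \<open>n\<close>,
  the order becomes reverse inclusion, and every nonempty up-set \<open>S\<close> arises, from the game
  with no Left options and Right options \<open>S\<close>. Sending \<open>\<triangledown>\<close> to the empty up-set identifies
  \<open>L_n^*\<close> with the dual of the lattice of up-sets of a finite preorder, which is closed under
  union and intersection and hence distributive.\<close>

section \<open>Rings of sets are distributive lattices\<close>

lemma join_on_eqI:
  assumes "is_join S le x y z"
    and "\<And>u v. u \<in> S \<Longrightarrow> v \<in> S \<Longrightarrow> le u v \<Longrightarrow> le v u \<Longrightarrow> u = v"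
  shows "join_on S le x y = z"
  unfolding join_on_def using assms by (intro the_equality) (auto simp: is_join_def)

lemma meet_on_eqI:
  assumes "is_meet S le x y z"
    and "\<And>u v. u \<in> S \<Longrightarrow> v \<in> S \<Longrightarrow> le u v \<Longrightarrow> le v u \<Longrightarrow> u = v"
  shows "meet_on S le x y = z"
  unfolding meet_on_def using assms by (intro the_equality) (auto simp: is_meet_def)

lemma distributive_lattice_on_if_ring_of_sets:
  assumes le_iff: "\<And>x y. x \<in> S \<Longrightarrow> y \<in> S \<Longrightarrow> le x y \<longleftrightarrow> F y \<subseteq> F x"
    and antisym: "\<And>x y. x \<in> S \<Longrightarrow> y \<in> S \<Longrightarrow> le x y \<Longrightarrow> le y x \<Longrightarrow> x = y"
    and Int_closed: "\<And>x y. x \<in> S \<Longrightarrow> y \<in> S \<Longrightarrow> F x \<inter> F y \<in> F ` S"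
    and Un_closed: "\<And>x y. x \<in> S \<Longrightarrow> y \<in> S \<Longrightarrow> F x \<union> F y \<in> F ` S"
  shows "distributive_lattice_on S le"
proof -
  have is_join: "is_join S le x y z" if "x \<in> S" "y \<in> S" "z \<in> S" "F z = F x \<inter> F y" for x y z
    using that le_iff by (auto simp: is_join_def)
  have is_meet: "is_meet S le x y z" if "x \<in> S" "y \<in> S" "z \<in> S" "F z = F x \<union> F y" for x y z
    using that le_iff by (auto simp: is_meet_def)
  have join: "join_on S le x y = z" if "x \<in> S" "y \<in> S" "z \<in> S" "F z = F x \<inter> F y" for x y z
    using join_on_eqI[OF is_join[OF that]] antisym by blast
  have meet: "meet_on S le x y = z" if "x \<in> S" "y \<in> S" "z \<in> S" "F z = F x \<union> F y" for x y z
    using meet_on_eqI[OF is_meet[OF that]] antisym by blast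
  have distrib: "meet_on S le x (join_on S le y z) = join_on S le (meet_on S le x y) (meet_on S le x z)"
    if S: "x \<in> S" "y \<in> S" "z \<in> S" for x y z
  proof -
    obtain j where j: "j \<in> S" "F j = F y \<inter> F z" using Int_closed[of y z] S by force
    obtain m where m: "m \<in> S" "F m = F x \<union> F j" using Un_closed[of x j] S j by force
    obtain m1 where m1: "m1 \<in> S" "F m1 = F x \<union> F y" using Un_closed[of x y] S by force
    obtain m2 where m2: "m2 \<in> S" "F m2 = F x \<union> F z" using Un_closed[of x z] S by force
    have "meet_on S le x (join_on S le y z) = m" using join j meet m S by simp
    also have "\<dots> = join_on S le m1 m2"
      using join[OF m1(1) m2(1) m(1)] m m1 m2 j by auto
    also have "\<dots> = join_on S le (meet_on S le x y) (meet_on S le x z)" using meet m1 m2 S by simp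
    finally show ?thesis .
  qed
  have "poset_on S le"
    using le_iff antisym by (auto simp: poset_on_def)
  moreover have "\<exists>z. is_join S le x y z" if "x \<in> S" "y \<in> S" for x y
    using Int_closed[OF that] is_join that by force
  moreover have "\<exists>z. is_meet S le x y z" if "x \<in> S" "y \<in> S" for x y
    using Un_closed[OF that] is_meet that by force
  ultimately show ?thesis
    using distrib by (simp add: distributive_lattice_on_def)
qed

lemma size_lopts: "x |\<in>| lopts G \<Longrightarrow> size x < size G"
  by (cases G) (auto dest: size_lopt)

lemma size_ropts: "x |\<in>| ropts G \<Longrightarrow> size x < size G"
  by (cases G) (auto dest: size_ropt)

lemma lopts_gsum [simp]: "lopts (gsum G H) = (\<lambda>x. gsum x H) |`| lopts G |\<union>| gsum G |`| lopts H"
  by (cases G; cases H) simp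

lemma ropts_gsum [simp]: "ropts (gsum G H) = (\<lambda>x. gsum x H) |`| ropts G |\<union>| gsum G |`| ropts H"
  by (cases G; cases H) simp

lemma wins_Left_iff: "wins G True \<longleftrightarrow> lopts G = {||} \<or> (\<exists>x. x |\<in>| lopts G \<and> \<not> wins x False)"
  by (cases G) auto

lemma wins_Right_iff: "wins G False \<longleftrightarrow> ropts G = {||} \<or> (\<exists>x. x |\<in>| ropts G \<and> \<not> wins x True)"
  by (cases G) auto

definition misere_ge :: "game \<Rightarrow> game \<Rightarrow> bool" where
  "misere_ge G H \<longleftrightarrow> (\<forall>X. (wins (gsum H X) True \<longrightarrow> wins (gsum G X) True) \<and>
                            (wins (gsum G X) False \<longrightarrow> wins (gsum H X) False))"

lemma misere_ge_refl: "misere_ge G G"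
  by (simp add: misere_ge_def)

lemma misere_ge_trans: "misere_ge G H \<Longrightarrow> misere_ge H K \<Longrightarrow> misere_ge G K"
  unfolding misere_ge_def by blast

lemma outcome_ge_iff_wins:
  "outcome_ge (outcome G) (outcome H) \<longleftrightarrow>
     (wins H True \<longrightarrow> wins G True) \<and> (wins G False \<longrightarrow> wins H False)"
  unfolding outcome_ge_def outcome_def by (auto split: if_splits)

lemma universe_UNIV: "universe UNIV"
  by (simp add: universe_def)

lemma dge_iff_misere_ge: "dge G H \<longleftrightarrow> misere_ge G H"
  unfolding dge_def ge_in_def misere_ge_def outcome_ge_iff_wins using universe_UNIV by blast

lemma deq_iff_misere_ge: "deq G H \<longleftrightarrow> misere_ge G H \<and> misere_ge H G"
  by (simp add: deq_def dge_iff_misere_ge)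

section \<open>Comparing Left dead-ends\<close>

definition right_options_ge :: "game \<Rightarrow> game \<Rightarrow> bool" where
  "right_options_ge G H \<longleftrightarrow> (ropts G = {||} \<longrightarrow> ropts H = {||}) \<and>
     (\<forall>g. g |\<in>| ropts G \<longrightarrow> (\<exists>h. h |\<in>| ropts H \<and> misere_ge g h))"

lemma wins_Left_sum_mono:
  assumes "lopts G = {||}" "lopts H = {||}"
    and "\<And>x. x |\<in>| lopts X \<Longrightarrow> wins (gsum G x) False \<Longrightarrow> wins (gsum H x) False"
    and "wins (gsum H X) True"
  shows "wins (gsum G X) True"
  using assms by (auto simp: wins_Left_iff)

lemma wins_Right_sum_mono:
  assumes ge: "right_options_ge G H"
    and IH: "\<And>x. x |\<in>| ropts X \<Longrightarrow> wins (gsum H x) True \<Longrightarrow> wins (gsum G x) True"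
    and wins: "wins (gsum G X) False"
  shows "wins (gsum H X) False"
proof (cases "ropts (gsum G X) = {||}")
  case True
  then show ?thesis using ge by (simp add: right_options_ge_def wins_Right_iff)
next
  case False
  with wins obtain y where y: "y |\<in>| ropts (gsum G X)" "\<not> wins y True"
    by (auto simp: wins_Right_iff)
  then consider (G) g where "g |\<in>| ropts G" "y = gsum g X"
    | (X) x where "x |\<in>| ropts X" "y = gsum G x"
    by auto
  then show ?thesis
  proof cases
    case G
    then obtain h where "h |\<in>| ropts H" "misere_ge g h"
      using ge by (auto simp: right_options_ge_def)
    then show ?thesis using y G by (auto simp: misere_ge_def wins_Right_iff)
  next
    case X
    then show ?thesis using y IH by (auto simp: wins_Right_iff)
  qed
qed

lemma misere_ge_if_right_options_ge:
  assumes "lopts G = {||}" "lopts H = {||}" "right_options_ge G H"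
  shows "misere_ge G H"
  unfolding misere_ge_def
proof
  fix X
  show "(wins (gsum H X) True \<longrightarrow> wins (gsum G X) True) \<and>
        (wins (gsum G X) False \<longrightarrow> wins (gsum H X) False)"
  proof (induction X rule: measure_induct_rule[where f = size])
    case (less X)
    have "wins (gsum G x) False \<Longrightarrow> wins (gsum H x) False" if "x |\<in>| lopts X" for x
      using less.IH size_lopts[OF that] by blast
    moreover have "wins (gsum H x) True \<Longrightarrow> wins (gsum G x) True" if "x |\<in>| ropts X" for x
      using less.IH size_ropts[OF that] by blast
    ultimately show ?case
      using assms wins_Left_sum_mono[of G H X] wins_Right_sum_mono[of G H X] by blast
  qed
qed

lemma subpositions_trans: "x \<in> subpositions g \<Longrightarrow> g \<in> subpositions G \<Longrightarrow> x \<in> subpositions G"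
  by (induction rule: subpositions.induct) (auto intro: subpositions.intros)

lemma subpositions_cases:
  "x \<in> subpositions G \<Longrightarrow> x = G \<or> (\<exists>g. (g |\<in>| lopts G \<or> g |\<in>| ropts G) \<and> x \<in> subpositions g)"
  by (induction rule: subpositions.induct) (auto intro: subpositions.intros)

lemma left_dead_end_iff:
  "left_dead_end G \<longleftrightarrow> lopts G = {||} \<and> (\<forall>g. g |\<in>| ropts G \<longrightarrow> left_dead_end g)"
proof
  assume "left_dead_end G"
  then show "lopts G = {||} \<and> (\<forall>g. g |\<in>| ropts G \<longrightarrow> left_dead_end g)"
    unfolding left_dead_end_def by (meson subpositions_trans subpositions.ropt subpositions.self)
next
  assume "lopts G = {||} \<and> (\<forall>g. g |\<in>| ropts G \<longrightarrow> left_dead_end g)"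
  then show "left_dead_end G"
    unfolding left_dead_end_def using subpositions_cases by fastforce
qed

lemma left_dead_end_lopts: "left_dead_end G \<Longrightarrow> lopts G = {||}"
  using left_dead_end_iff by blast

lemma left_dead_end_ropt: "left_dead_end G \<Longrightarrow> g |\<in>| ropts G \<Longrightarrow> left_dead_end g"
  using left_dead_end_iff by blast

lemma left_dead_end_Game [simp]:
  "left_dead_end (Game {||} R) \<longleftrightarrow> (\<forall>g. g |\<in>| R \<longrightarrow> left_dead_end g)"
  by (subst left_dead_end_iff) simp

lemma lopts_zero [simp]: "lopts zero_game = {||}"
  by (simp add: zero_game_def)

lemma ropts_zero [simp]: "ropts zero_game = {||}"
  by (simp add: zero_game_def)

lemma left_dead_end_zero [simp]: "left_dead_end zero_game"
  by (simp add: zero_game_def)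

lemma left_dead_end_eq_zero: "left_dead_end G \<Longrightarrow> ropts G = {||} \<Longrightarrow> G = zero_game"
  unfolding zero_game_def by (metis game.collapse left_dead_end_lopts)

lemma wins_Left_sum_zero: "lopts G = {||} \<Longrightarrow> wins (gsum G zero_game) True"
  by (simp add: wins_Left_iff)

lemma not_wins_Right_sum_zero:
  "left_dead_end H \<Longrightarrow> ropts H \<noteq> {||} \<Longrightarrow> \<not> wins (gsum H zero_game) False"
  by (auto simp: wins_Right_iff wins_Left_sum_zero left_dead_end_lopts dest: left_dead_end_ropt)

lemma not_wins_Left_sum_Game:
  assumes "lopts G = {||}" "S \<noteq> {||}" "\<And>s. s |\<in>| S \<Longrightarrow> wins (gsum G (W s)) False"
  shows "\<not> wins (gsum G (Game (W |`| S) R)) True"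
proof -
  have "lopts (gsum G (Game (W |`| S) R)) = (\<lambda>s. gsum G (W s)) |`| S"
    using assms(1) by (simp add: fimage_fimage comp_def)
  then show ?thesis
    using assms(2,3) by (auto simp: wins_Left_iff)
qed

lemma not_wins_Right_sum_Game:
  assumes "left_dead_end H" "ropts H |\<subseteq>| S" "\<And>s. s |\<in>| S \<Longrightarrow> \<not> wins (gsum s (W s)) False"
  shows "\<not> wins (gsum H (Game (W |`| S) {|zero_game|})) False"
proof -
  let ?X = "Game (W |`| S) {|zero_game|}"
  have "wins (gsum h ?X) True" if "h |\<in>| ropts H" for h
  proof -
    have "gsum h (W h) |\<in>| lopts (gsum h ?X)" using that assms(2) by auto
    moreover have "\<not> wins (gsum h (W h)) False" using that assms(2,3) by auto
    ultimately show ?thesis by (auto simp: wins_Left_iff)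
  qed
  then show ?thesis
    using assms(1) wins_Left_sum_zero[of H] by (auto simp: wins_Right_iff left_dead_end_lopts)
qed

lemma exists_left_dead_end_not_right_options_ge: "\<exists>s. left_dead_end s \<and> \<not> right_options_ge g s"
proof (cases "ropts g = {||}")
  case True
  then show ?thesis
    by (intro exI[of _ "Game {||} {|zero_game|}"]) (simp add: right_options_ge_def)
next
  case False
  then show ?thesis
    by (intro exI[of _ zero_game]) (auto simp: right_options_ge_def)
qed

text \<open>If \<open>G \<ge> H\<close> fails at the Right option \<open>g\<close> of \<open>G\<close>, the distinguishing game \<open>X\<close> has as
  Left options games \<open>W s\<close> separating \<open>g\<close> from every Right option \<open>s\<close> of \<open>H\<close> (by induction),
  and \<open>0\<close> as its only Right option. The extra \<open>s0\<close> keeps Left from running out of moves in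
  \<open>g + X\<close>; the option \<open>0\<close> keeps Right from running out of moves in \<open>H + X\<close>, and moving
  there loses because Left is then stuck.\<close>

lemma exists_distinguishing_game:
  assumes "left_dead_end G" "left_dead_end H" "\<not> right_options_ge G H"
  shows "\<exists>X. wins (gsum G X) False \<and> \<not> wins (gsum H X) False"
  using assms
proof (induction G arbitrary: H rule: measure_induct_rule[where f = size])
  case (less G)
  show ?case
  proof (cases "ropts G = {||}")
    case True
    with less.prems have "ropts H \<noteq> {||}" by (simp add: right_options_ge_def)
    then show ?thesis
      using True less.prems(2) not_wins_Right_sum_zero
      by (intro exI[of _ zero_game]) (simp add: wins_Right_iff)
  next
    case False
    with less.prems(3) obtain g where g: "g |\<in>| ropts G"
      and g_not_ge: "\<And>h. h |\<in>| ropts H \<Longrightarrow> \<not> misere_ge g h"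
      by (auto simp: right_options_ge_def)
    have dead_g: "left_dead_end g" using g less.prems(1) left_dead_end_ropt by blast
    obtain s0 where s0: "left_dead_end s0" "\<not> right_options_ge g s0"
      using exists_left_dead_end_not_right_options_ge by blast
    define S where "S = finsert s0 (ropts H)"
    have "\<exists>W. wins (gsum g W) False \<and> \<not> wins (gsum s W) False" if "s |\<in>| S" for s
    proof -
      have dead_s: "left_dead_end s"
        using that s0 less.prems(2) left_dead_end_ropt by (auto simp: S_def)
      moreover have "\<not> right_options_ge g s"
        using that s0 g_not_ge[of s] misere_ge_if_right_options_ge[of g s]
          left_dead_end_lopts[OF dead_g] left_dead_end_lopts[OF dead_s]
        by (auto simp: S_def)
      ultimately show ?thesis
        using less.IH size_ropts[OF g] dead_g by blast
    qed
    then obtain W where W: "\<And>s. s |\<in>| S \<Longrightarrow> wins (gsum g (W s)) False \<and> \<not> wins (gsum s (W s)) False"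
      by metis
    define X where "X = Game (W |`| S) {|zero_game|}"
    have "\<not> wins (gsum g X) True"
      unfolding X_def using W dead_g left_dead_end_lopts
      by (intro not_wins_Left_sum_Game) (auto simp: S_def)
    then have "wins (gsum G X) False" using g by (auto simp: wins_Right_iff)
    moreover have "\<not> wins (gsum H X) False"
      unfolding X_def using W less.prems(2) by (intro not_wins_Right_sum_Game) (auto simp: S_def)
    ultimately show ?thesis by blast
  qed
qed

theorem left_dead_end_misere_ge_iff:
  assumes "left_dead_end G" "left_dead_end H"
  shows "misere_ge G H \<longleftrightarrow> right_options_ge G H"
proof
  assume "misere_ge G H"
  then show "right_options_ge G H"
    using assms exists_distinguishing_game unfolding misere_ge_def by blast
next
  assume "right_options_ge G H"
  then show "misere_ge G H"
    using assms misere_ge_if_right_options_ge left_dead_end_lopts by blast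
qed

lemma height_lopt_less: "g |\<in>| lopts G \<Longrightarrow> height g < height G"
  by (cases G) (auto simp: less_Suc_eq_le intro!: Max_ge)

lemma height_ropt_less: "g |\<in>| ropts G \<Longrightarrow> height g < height G"
  by (cases G) (auto simp: less_Suc_eq_le intro!: Max_ge)

lemma height_Game_le:
  assumes "\<And>x. x |\<in>| A \<Longrightarrow> height x < n" "\<And>x. x |\<in>| B \<Longrightarrow> height x < n"
  shows "height (Game A B) \<le> n"
proof (cases "A = {||} \<and> B = {||}")
  case False
  with assms have "Max (fset (height |`| A |\<union>| height |`| B)) < n"
    by (subst Max_less_iff) auto
  with False show ?thesis by simp
qed simp

lemma height_eq_0_iff: "height G = 0 \<longleftrightarrow> G = zero_game"
  by (cases G) (simp add: zero_game_def)

lemma finite_height_le: "finite {G. height G \<le> k}"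
proof (induction k)
  case 0
  have "{G. height G \<le> 0} = {zero_game}"
    by (auto simp: height_eq_0_iff)
  then show ?case by simp
next
  case (Suc k)
  let ?T = "{G. height G \<le> k}"
  have "{G. height G \<le> Suc k} \<subseteq> (\<lambda>(A, B). Game (Abs_fset A) (Abs_fset B)) ` (Pow ?T \<times> Pow ?T)"
  proof
    fix G assume "G \<in> {G. height G \<le> Suc k}"
    then have "(fset (lopts G), fset (ropts G)) \<in> Pow ?T \<times> Pow ?T"
      using height_lopt_less height_ropt_less by fastforce
    then show "G \<in> (\<lambda>(A, B). Game (Abs_fset A) (Abs_fset B)) ` (Pow ?T \<times> Pow ?T)"
      by (rule rev_image_eqI) (simp add: fset_inverse)
  qed
  moreover have "finite ((\<lambda>(A, B). Game (Abs_fset A) (Abs_fset B)) ` (Pow ?T \<times> Pow ?T))"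
    using Suc by simp
  ultimately show ?case by (rule finite_subset)
qed

lemma deq_refl: "deq G G"
  by (simp add: deq_iff_misere_ge misere_ge_refl)

lemma birthday_le_height: "left_dead_end H \<Longrightarrow> deq H G \<Longrightarrow> birthday G \<le> height H"
  unfolding birthday_def by (rule Least_le) blast

lemma exists_birthday_representative:
  "left_dead_end G \<Longrightarrow> \<exists>H. left_dead_end H \<and> deq H G \<and> height H = birthday G"
  unfolding birthday_def by (rule LeastI_ex) (use deq_refl in blast)

lemma dclass_eq: "deq G H \<Longrightarrow> dclass G = dclass H"
  unfolding dclass_def deq_iff_misere_ge using misere_ge_trans by blast

lemma class_le_dclass_iff:
  "left_dead_end G \<Longrightarrow> left_dead_end H \<Longrightarrow> class_le (dclass G) (dclass H) \<longleftrightarrow> misere_ge H G"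
  unfolding class_le_def dclass_def dge_iff_misere_ge deq_iff_misere_ge
  using misere_ge_trans misere_ge_refl by blast

section \<open>Elements of \<open>L_n^*\<close> as up-sets\<close>

definition Ln_times_repr :: "nat \<Rightarrow> game \<Rightarrow> bool" where
  "Ln_times_repr n G \<longleftrightarrow> left_dead_end G \<and> height G \<le> n \<and> ropts G \<noteq> {||}"

lemma dclass_ne_zero: "left_dead_end G \<Longrightarrow> ropts G \<noteq> {||} \<Longrightarrow> dclass G \<noteq> dclass zero_game"
proof
  assume G: "left_dead_end G" "ropts G \<noteq> {||}" and "dclass G = dclass zero_game"
  then have "zero_game \<in> dclass G"
    by (simp add: dclass_def deq_refl)
  then have "misere_ge zero_game G"
    by (simp add: dclass_def deq_iff_misere_ge)
  with G show False
    by (simp add: left_dead_end_misere_ge_iff right_options_ge_def)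
qed

lemma Some_mem_Ln_star_iff: "Some A \<in> Ln_star n \<longleftrightarrow> (\<exists>G. Ln_times_repr n G \<and> A = dclass G)"
proof
  assume "Some A \<in> Ln_star n"
  then have A: "A \<in> Ln n" "A \<noteq> dclass zero_game"
    by (auto simp: Ln_star_def Ln_times_def)
  then obtain G where G: "A = dclass G" "left_dead_end G" "birthday G \<le> n"
    by (auto simp: Ln_def)
  then obtain H where H: "left_dead_end H" "deq H G" "height H = birthday G"
    using exists_birthday_representative by blast
  have "A = dclass H" using G H dclass_eq by simp
  moreover have "ropts H \<noteq> {||}" using H A \<open>A = dclass H\<close> left_dead_end_eq_zero by blast
  ultimately show "\<exists>G. Ln_times_repr n G \<and> A = dclass G"
    using H G by (auto simp: Ln_times_repr_def)
next
  assume "\<exists>G. Ln_times_repr n G \<and> A = dclass G"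
  then obtain G where G: "Ln_times_repr n G" "A = dclass G" by blast
  then have "birthday G \<le> n"
    using birthday_le_height[OF _ deq_refl, of G] by (simp add: Ln_times_repr_def)
  then show "Some A \<in> Ln_star n"
    using G dclass_ne_zero by (auto simp: Ln_star_def Ln_times_def Ln_def Ln_times_repr_def)
qed

lemma Ln_star_cases [consumes 1, case_names top dclass]:
  assumes "x \<in> Ln_star n"
  obtains "x = None" | G where "Ln_times_repr n G" "x = Some (dclass G)"
  using assms Some_mem_Ln_star_iff by (cases x) auto

definition dead_ends_below :: "nat \<Rightarrow> game set" where
  "dead_ends_below n = {G. left_dead_end G \<and> height G < n}"

lemma finite_dead_ends_below: "finite (dead_ends_below n)"
  by (rule finite_subset[OF _ finite_height_le[of n]]) (auto simp: dead_ends_below_def)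

definition up_closed :: "nat \<Rightarrow> game set \<Rightarrow> bool" where
  "up_closed n S \<longleftrightarrow> S \<subseteq> dead_ends_below n \<and>
     (\<forall>x\<in>dead_ends_below n. \<forall>s\<in>S. misere_ge x s \<longrightarrow> x \<in> S)"

lemma up_closed_empty: "up_closed n {}"
  by (simp add: up_closed_def)

lemma up_closed_Int: "up_closed n S \<Longrightarrow> up_closed n T \<Longrightarrow> up_closed n (S \<inter> T)"
  unfolding up_closed_def by blast

lemma up_closed_Un: "up_closed n S \<Longrightarrow> up_closed n T \<Longrightarrow> up_closed n (S \<union> T)"
  unfolding up_closed_def by blast

definition right_upset :: "nat \<Rightarrow> game \<Rightarrow> game set" where
  "right_upset n G = {x \<in> dead_ends_below n. \<exists>g. g |\<in>| ropts G \<and> misere_ge x g}"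

lemma up_closed_right_upset: "up_closed n (right_upset n G)"
  unfolding up_closed_def right_upset_def using misere_ge_trans by blast

lemma ropt_mem_right_upset: "Ln_times_repr n G \<Longrightarrow> g |\<in>| ropts G \<Longrightarrow> g \<in> right_upset n G"
  using left_dead_end_ropt height_ropt_less misere_ge_refl
  by (fastforce simp: Ln_times_repr_def right_upset_def dead_ends_below_def)

lemma right_upset_nonempty: "Ln_times_repr n G \<Longrightarrow> right_upset n G \<noteq> {}"
  using ropt_mem_right_upset by (fastforce simp: Ln_times_repr_def)

lemma right_upset_mono:
  assumes "left_dead_end G" "left_dead_end H" "misere_ge H G"
  shows "right_upset n H \<subseteq> right_upset n G"
proof
  fix x assume "x \<in> right_upset n H"
  then obtain h where x: "x \<in> dead_ends_below n" "h |\<in>| ropts H" "misere_ge x h"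
    by (auto simp: right_upset_def)
  then obtain g where "g |\<in>| ropts G" "misere_ge h g"
    using assms by (auto simp: left_dead_end_misere_ge_iff right_options_ge_def)
  then show "x \<in> right_upset n G"
    using x misere_ge_trans by (auto simp: right_upset_def)
qed

lemma right_upset_subset_iff:
  assumes "Ln_times_repr n G" "Ln_times_repr n H"
  shows "right_upset n H \<subseteq> right_upset n G \<longleftrightarrow> misere_ge H G"
proof
  assume sub: "right_upset n H \<subseteq> right_upset n G"
  have "\<exists>g. g |\<in>| ropts G \<and> misere_ge h g" if "h |\<in>| ropts H" for h
    using sub ropt_mem_right_upset[OF assms(2) that] by (auto simp: right_upset_def)
  then have "right_options_ge H G"
    using assms by (simp add: right_options_ge_def Ln_times_repr_def)
  then show "misere_ge H G"
    using assms by (simp add: left_dead_end_misere_ge_iff Ln_times_repr_def)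
next
  assume "misere_ge H G"
  then show "right_upset n H \<subseteq> right_upset n G"
    using assms right_upset_mono by (simp add: Ln_times_repr_def)
qed

lemma exists_right_upset_eq:
  assumes "up_closed n S" "S \<noteq> {}"
  shows "\<exists>G. Ln_times_repr n G \<and> right_upset n G = S"
proof -
  have "finite S"
    using assms(1) finite_dead_ends_below finite_subset by (auto simp: up_closed_def)
  then have fset_S: "fset (Abs_fset S) = S"
    by (simp add: Abs_fset_inverse)
  let ?G = "Game {||} (Abs_fset S)"
  have "height ?G \<le> n"
    using assms(1) fset_S by (intro height_Game_le) (auto simp: up_closed_def dead_ends_below_def)
  then have "Ln_times_repr n ?G"
    using assms fset_S by (auto simp: Ln_times_repr_def up_closed_def dead_ends_below_def)
  moreover have "right_upset n ?G = S"
    using assms(1) fset_S misere_ge_refl by (auto simp: right_upset_def up_closed_def)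
  ultimately show ?thesis by blast
qed

definition upset_of :: "nat \<Rightarrow> game set option \<Rightarrow> game set" where
  "upset_of n x = (case x of None \<Rightarrow> {} | Some A \<Rightarrow> \<Union>G\<in>A. right_upset n G)"

lemma upset_of_None [simp]: "upset_of n None = {}"
  by (simp add: upset_of_def)

lemma upset_of_dclass [simp]:
  assumes "Ln_times_repr n G"
  shows "upset_of n (Some (dclass G)) = right_upset n G"
proof
  have "G \<in> dclass G"
    using assms deq_refl by (simp add: dclass_def Ln_times_repr_def)
  then show "right_upset n G \<subseteq> upset_of n (Some (dclass G))"
    by (auto simp: upset_of_def)
  show "upset_of n (Some (dclass G)) \<subseteq> right_upset n G"
    using assms right_upset_mono
    by (auto simp: upset_of_def dclass_def deq_iff_misere_ge Ln_times_repr_def)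
qed

lemma up_closed_upset_of:
  assumes "x \<in> Ln_star n"
  shows "up_closed n (upset_of n x)"
  using assms by (cases rule: Ln_star_cases) (simp_all add: up_closed_empty up_closed_right_upset)

lemma upset_of_Ln_star: "upset_of n ` Ln_star n = Collect (up_closed n)"
proof
  show "upset_of n ` Ln_star n \<subseteq> Collect (up_closed n)"
    using up_closed_upset_of by blast
next
  show "Collect (up_closed n) \<subseteq> upset_of n ` Ln_star n"
  proof
    fix S assume S: "S \<in> Collect (up_closed n)"
    show "S \<in> upset_of n ` Ln_star n"
    proof (cases "S = {}")
      case True
      then show ?thesis by (force simp: Ln_star_def)
    next
      case False
      with S obtain G where "Ln_times_repr n G" "right_upset n G = S"
        using exists_right_upset_eq by blast
      then show ?thesis
        using Some_mem_Ln_star_iff by (metis image_eqI upset_of_dclass)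
    qed
  qed
qed

lemma star_le_iff_upset_of_subset:
  assumes "x \<in> Ln_star n" "y \<in> Ln_star n"
  shows "star_le x y \<longleftrightarrow> upset_of n y \<subseteq> upset_of n x"
  using assms(1)
proof (cases rule: Ln_star_cases)
  case top
  from assms(2) show ?thesis
  proof (cases rule: Ln_star_cases)
    case (dclass H)
    then show ?thesis using top by (simp add: right_upset_nonempty)
  qed (simp add: top)
next
  case (dclass G)
  from assms(2) show ?thesis
  proof (cases rule: Ln_star_cases)
    case (dclass H)
    with \<open>Ln_times_repr n G\<close> \<open>x = Some (dclass G)\<close> show ?thesis
      by (simp add: class_le_dclass_iff right_upset_subset_iff Ln_times_repr_def)
  qed simp
qed

lemma star_le_antisym:
  assumes "x \<in> Ln_star n" "y \<in> Ln_star n" "star_le x y" "star_le y x"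
  shows "x = y"
  using assms(1)
proof (cases rule: Ln_star_cases)
  case top
  with assms(2,3) show ?thesis by (cases rule: Ln_star_cases) simp_all
next
  case (dclass G)
  from assms(2) show ?thesis
  proof (cases rule: Ln_star_cases)
    case top
    with assms(4) \<open>x = Some (dclass G)\<close> show ?thesis by simp
  next
    case (dclass H)
    with \<open>Ln_times_repr n G\<close> \<open>x = Some (dclass G)\<close> assms(3,4)
    have "deq G H" by (simp add: class_le_dclass_iff deq_iff_misere_ge Ln_times_repr_def)
    then show ?thesis
      using \<open>x = Some (dclass G)\<close> \<open>y = Some (dclass H)\<close> dclass_eq by simp
  qed
qed

theorem mainTheorem9:
  fixes n :: nat
  shows "distributive_lattice_on (Ln_star n) star_le"
proof (rule distributive_lattice_on_if_ring_of_sets[where F = "upset_of n"])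
  fix x y assume xy: "x \<in> Ln_star n" "y \<in> Ln_star n"
  then show "star_le x y \<longleftrightarrow> upset_of n y \<subseteq> upset_of n x"
    by (rule star_le_iff_upset_of_subset)
  show "star_le x y \<Longrightarrow> star_le y x \<Longrightarrow> x = y"
    using xy by (rule star_le_antisym)
  have "up_closed n (upset_of n x)" "up_closed n (upset_of n y)"
    using xy upset_of_Ln_star by blast+
  then show "upset_of n x \<inter> upset_of n y \<in> upset_of n ` Ln_star n"
    and "upset_of n x \<union> upset_of n y \<in> upset_of n ` Ln_star n"
    by (simp_all add: upset_of_Ln_star up_closed_Int up_closed_Un)
qed

end
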